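(* Work in second-order logic (with the Comprehension scheme) in the language whose only non-logical primitive is the binary relation $\in$, and assume only the axioms Extensionality, $\forall a\forall b(\forall x(x\in a\leftrightarrow x\in b)\to a=b)$, and Separation, $\forall F\forall a\exists b\forall x(x\in b\leftrightarrow (F(x)\wedge x\in a))$. Then the levels are well-ordered by membership. That is: (i) for every property $F$, if some level is $F$, then there is a level $s$ that is $F$ such that no level $r\in s$ is $F$; and (ii) for any levels $s,t$: $s\in t$ or $s=t$ or $t\in s$.
   Context: For a set $a$, its potentiation is $\mathrm{pot}(a)=\{x : \exists c(x\subseteq c\wedge c\in a)\}$, when this set exists (i.e. "$b=\mathrm{pot}(a)$" abbreviates $\forall x(x\in b\leftrightarrow\exists c(x\subseteq c\wedge c\in a))$). A set $h$ is a history iff for every $x\in h$, $x=\mathrm{pot}(x\cap h)$. A set $s$ is a level iff $s=\mathrm{pot}(h)$ for some history $h$. *)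

theory Defs
  imports Main
begin

text \<open>A structure is a type 'a with a binary relation mem (membership).
  Second-order quantification ranges over all predicates 'a \<Rightarrow> bool.\<close>

definition subs :: "('a \<Rightarrow> 'a \<Rightarrow> bool) \<Rightarrow> 'a \<Rightarrow> 'a \<Rightarrow> bool" where
  "subs mem x c \<longleftrightarrow> (\<forall>y. mem y x \<longrightarrow> mem y c)"

text \<open>is_pot mem b A : b = pot(A), where A is given as a property (class) of sets.\<close>
definition is_pot :: "('a \<Rightarrow> 'a \<Rightarrow> bool) \<Rightarrow> 'a \<Rightarrow> ('a \<Rightarrow> bool) \<Rightarrow> bool" where
  "is_pot mem b A \<longleftrightarrow> (\<forall>x. mem x b \<longleftrightarrow> (\<exists>c. subs mem x c \<and> A c))"

definition history :: "('a \<Rightarrow> 'a \<Rightarrow> bool) \<Rightarrow> 'a \<Rightarrow> bool" where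
  "history mem h \<longleftrightarrow> (\<forall>x. mem x h \<longrightarrow> is_pot mem x (\<lambda>c. mem c x \<and> mem c h))"

definition level :: "('a \<Rightarrow> 'a \<Rightarrow> bool) \<Rightarrow> 'a \<Rightarrow> bool" where
  "level mem s \<longleftrightarrow> (\<exists>h. history mem h \<and> is_pot mem s (\<lambda>c. mem c h))"

end

theory Submission
  imports Defs
begin

text \<open>Call a set potent if it is closed under subsets; every potentiation, in particular every
  level, is potent. Separation makes membership well-founded on potent sets: if a class C of
  potent sets had no minimal element, the Russell set of those x \<notin> x that lie in every member
  of C would be a subset of a member of each member of C, hence a member of every member of C,
  and so would belong to itself iff it does not. The members of a history are transitive (by a
  minimal counterexample) and are levels themselves, so every member of a level is a subset of a
  level belonging to it. Taking s minimal among levels incomparable with some level, and then t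
  minimal among levels incomparable with s, each of s and t is then a subset of the other.\<close>

definition potent :: "('a \<Rightarrow> 'a \<Rightarrow> bool) \<Rightarrow> 'a \<Rightarrow> bool" where
  "potent mem q \<longleftrightarrow> (\<forall>x c. subs mem x c \<and> mem c q \<longrightarrow> mem x q)"

definition transitive_set :: "('a \<Rightarrow> 'a \<Rightarrow> bool) \<Rightarrow> 'a \<Rightarrow> bool" where
  "transitive_set mem q \<longleftrightarrow> (\<forall>x y. mem x y \<and> mem y q \<longrightarrow> mem x q)"

definition comparable :: "('a \<Rightarrow> 'a \<Rightarrow> bool) \<Rightarrow> 'a \<Rightarrow> 'a \<Rightarrow> bool" where
  "comparable mem s t \<longleftrightarrow> mem s t \<or> s = t \<or> mem t s"

lemma subsI: "(\<And>y. mem y x \<Longrightarrow> mem y c) \<Longrightarrow> subs mem x c"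
  unfolding subs_def by blast

lemma subsD: "subs mem x c \<Longrightarrow> mem y x \<Longrightarrow> mem y c"
  unfolding subs_def by blast

lemma subs_refl: "subs mem x x"
  unfolding subs_def by blast

lemma is_pot_memI: "is_pot mem b A \<Longrightarrow> subs mem x c \<Longrightarrow> A c \<Longrightarrow> mem x b"
  unfolding is_pot_def by blast

lemma is_pot_memD: "is_pot mem b A \<Longrightarrow> mem x b \<Longrightarrow> \<exists>c. subs mem x c \<and> A c"
  unfolding is_pot_def by blast

lemma potentD: "potent mem q \<Longrightarrow> subs mem x c \<Longrightarrow> mem c q \<Longrightarrow> mem x q"
  unfolding potent_def by blast

lemma transitive_setI: "(\<And>x y. mem x y \<Longrightarrow> mem y q \<Longrightarrow> mem x q) \<Longrightarrow> transitive_set mem q"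
  unfolding transitive_set_def by blast

lemma transitive_setD: "transitive_set mem q \<Longrightarrow> mem x y \<Longrightarrow> mem y q \<Longrightarrow> mem x q"
  unfolding transitive_set_def by blast

lemma comparable_sym: "comparable mem s t \<longleftrightarrow> comparable mem t s"
  unfolding comparable_def by blast

lemma history_memD: "history mem h \<Longrightarrow> mem x h \<Longrightarrow> is_pot mem x (\<lambda>c. mem c x \<and> mem c h)"
  unfolding history_def by blast

lemma levelE:
  assumes "level mem s"
  obtains h where "history mem h" "is_pot mem s (\<lambda>c. mem c h)"
  using assms unfolding level_def by blast

lemma is_pot_potent: "is_pot mem q A \<Longrightarrow> potent mem q"
  unfolding potent_def is_pot_def subs_def by meson

lemma level_potent: "level mem q \<Longrightarrow> potent mem q"
  by (blast elim: levelE intro: is_pot_potent)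

lemma potent_minimal_exists:
  assumes separation: "\<forall>F a. \<exists>b. \<forall>x. mem x b \<longleftrightarrow> (F x \<and> mem x a)"
    and C_potent: "\<And>q. C q \<Longrightarrow> potent mem q"
    and "C s"
  shows "\<exists>q. C q \<and> \<not> (\<exists>r. mem r q \<and> C r)"
proof (rule ccontr)
  assume "\<not> ?thesis"
  then have no_minimal: "\<And>q. C q \<Longrightarrow> \<exists>r. mem r q \<and> C r" by blast
  obtain J where J: "\<And>x. mem x J \<longleftrightarrow> \<not> mem x x \<and> (\<forall>q. C q \<longrightarrow> mem x q) \<and> mem x s"
    using separation[rule_format, of "\<lambda>x. \<not> mem x x \<and> (\<forall>q. C q \<longrightarrow> mem x q)" s] by blast
  have J_mem_C: "mem J q" if "C q" for q
  proof -
    obtain r where r: "mem r q" "C r" using no_minimal \<open>C q\<close> by blast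
    have "subs mem J r" using J r(2) by (intro subsI) blast
    then show ?thesis using potentD[OF C_potent[OF \<open>C q\<close>]] r(1) by blast
  qed
  then show False using J \<open>C s\<close> by blast
qed

lemma level_minimal_exists:
  assumes separation: "\<forall>F a. \<exists>b. \<forall>x. mem x b \<longleftrightarrow> (F x \<and> mem x a)"
    and "level mem s" "F s"
  shows "\<exists>s. level mem s \<and> F s \<and> \<not> (\<exists>r. mem r s \<and> level mem r \<and> F r)"
proof -
  have "\<exists>q. (level mem q \<and> F q) \<and> \<not> (\<exists>r. mem r q \<and> level mem r \<and> F r)"
    by (rule potent_minimal_exists[OF separation, of "\<lambda>q. level mem q \<and> F q"])
      (use level_potent assms(2,3) in auto)
  then show ?thesis by blast
qed

lemma level_transitive:
  assumes "level mem s"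
  shows "transitive_set mem s"
proof (rule transitive_setI)
  obtain h where h: "history mem h" "is_pot mem s (\<lambda>c. mem c h)"
    using assms by (rule levelE)
  fix x y assume "mem x y" "mem y s"
  obtain c where c: "subs mem y c" "mem c h" using is_pot_memD[OF h(2) \<open>mem y s\<close>] by blast
  have "mem x c" using subsD[OF c(1) \<open>mem x y\<close>] .
  then obtain d where "subs mem x d" "mem d h"
    using is_pot_memD[OF history_memD[OF h(1) c(2)]] by blast
  then show "mem x s" by (rule is_pot_memI[OF h(2)])
qed

lemma history_mem_transitive:
  assumes separation: "\<forall>F a. \<exists>b. \<forall>x. mem x b \<longleftrightarrow> (F x \<and> mem x a)"
    and h: "history mem h" and "mem c h"
  shows "transitive_set mem c"
proof (rule ccontr)
  let ?C = "\<lambda>q. mem q h \<and> \<not> transitive_set mem q"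
  assume "\<not> transitive_set mem c"
  have "\<exists>q. ?C q \<and> \<not> (\<exists>r. mem r q \<and> ?C r)"
  proof (rule potent_minimal_exists[OF separation])
    show "potent mem q" if "?C q" for q
      using is_pot_potent[OF history_memD[OF h]] that by blast
    show "?C c" using \<open>mem c h\<close> \<open>\<not> transitive_set mem c\<close> by blast
  qed
  then obtain q where q: "mem q h" "\<not> transitive_set mem q"
    and minimal: "\<And>r. mem r q \<Longrightarrow> mem r h \<Longrightarrow> transitive_set mem r"
    by blast
  have q_pot: "is_pot mem q (\<lambda>d. mem d q \<and> mem d h)" using history_memD[OF h q(1)] .
  have "transitive_set mem q"
  proof (rule transitive_setI)
    fix x y assume "mem x y" "mem y q"
    obtain e where e: "subs mem y e" "mem e q" "mem e h"
      using is_pot_memD[OF q_pot \<open>mem y q\<close>] by blast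
    have "mem x e" using subsD[OF e(1) \<open>mem x y\<close>] .
    then have "subs mem x e"
      by (intro subsI) (rule transitive_setD[OF minimal[OF e(2,3)]])
    then show "mem x q" using is_pot_memI[OF q_pot] e(2,3) by blast
  qed
  with q(2) show False by blast
qed

lemma history_mem_level:
  assumes separation: "\<forall>F a. \<exists>b. \<forall>x. mem x b \<longleftrightarrow> (F x \<and> mem x a)"
    and h: "history mem h" and c: "mem c h"
  shows "level mem c"
proof -
  obtain k where k: "\<And>x. mem x k \<longleftrightarrow> mem x h \<and> mem x c"
    using separation[rule_format, of "\<lambda>x. mem x h" c] by blast
  have "history mem k" unfolding history_def
  proof (intro allI impI)
    fix y assume "mem y k"
    then have y: "mem y h" "mem y c" using k by auto
    have "mem d c" if "mem d y" for d
      using history_mem_transitive[OF separation h c] that y(2) by (rule transitive_setD)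
    then have "(\<lambda>d. mem d y \<and> mem d h) = (\<lambda>d. mem d y \<and> mem d k)" using k by auto
    then show "is_pot mem y (\<lambda>d. mem d y \<and> mem d k)" using history_memD[OF h y(1)] by simp
  qed
  moreover have "(\<lambda>d. mem d c \<and> mem d h) = (\<lambda>d. mem d k)" using k by auto
  then have "is_pot mem c (\<lambda>d. mem d k)" using history_memD[OF h c] by simp
  ultimately show ?thesis unfolding level_def by blast
qed

lemma level_mem_subs_level:
  assumes separation: "\<forall>F a. \<exists>b. \<forall>x. mem x b \<longleftrightarrow> (F x \<and> mem x a)"
    and "level mem s" "mem x s"
  obtains c where "level mem c" "mem c s" "subs mem x c"
proof -
  obtain h where h: "history mem h" "is_pot mem s (\<lambda>c. mem c h)"
    using \<open>level mem s\<close> by (rule levelE)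
  obtain c where c: "subs mem x c" "mem c h" using is_pot_memD[OF h(2) \<open>mem x s\<close>] by blast
  show thesis
  proof
    show "level mem c" using history_mem_level[OF separation h(1) c(2)] .
    show "mem c s" using is_pot_memI[OF h(2) subs_refl c(2)] .
  qed (fact c(1))
qed

lemma level_subs_if_members_comparable:
  assumes separation: "\<forall>F a. \<exists>b. \<forall>x. mem x b \<longleftrightarrow> (F x \<and> mem x a)"
    and s: "level mem s" and t: "level mem t" and "\<not> mem t s"
    and members_comparable: "\<And>c. mem c s \<Longrightarrow> level mem c \<Longrightarrow> comparable mem c t"
  shows "subs mem s t"
proof (rule subsI)
  fix x assume "mem x s"
  with separation s obtain c where c: "level mem c" "mem c s" "subs mem x c"
    by (rule level_mem_subs_level)
  have "\<not> mem t c" using transitive_setD[OF level_transitive[OF s] _ c(2)] \<open>\<not> mem t s\<close> by blast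
  then have "mem c t" using members_comparable[OF c(2,1)] c(2) \<open>\<not> mem t s\<close>
    unfolding comparable_def by blast
  then show "mem x t" by (rule potentD[OF level_potent[OF t] c(3)])
qed

lemma levels_comparable:
  assumes extensionality: "\<forall>a b. (\<forall>x. mem x a \<longleftrightarrow> mem x b) \<longrightarrow> a = b"
    and separation: "\<forall>F a. \<exists>b. \<forall>x. mem x b \<longleftrightarrow> (F x \<and> mem x a)"
    and "level mem s" "level mem t"
  shows "comparable mem s t"
proof (rule ccontr)
  assume "\<not> comparable mem s t"
  then obtain s0 where s0: "level mem s0" "\<exists>t. level mem t \<and> \<not> comparable mem s0 t"
    and s0_minimal: "\<And>r t. mem r s0 \<Longrightarrow> level mem r \<Longrightarrow> level mem t \<Longrightarrow> comparable mem r t"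
    using level_minimal_exists[OF separation \<open>level mem s\<close>,
        of "\<lambda>s. \<exists>t. level mem t \<and> \<not> comparable mem s t"] \<open>level mem t\<close>
    by blast
  then obtain t0 where t0: "level mem t0" "\<not> comparable mem s0 t0"
    and t0_minimal: "\<And>r. mem r t0 \<Longrightarrow> level mem r \<Longrightarrow> comparable mem s0 r"
    using level_minimal_exists[OF separation, of _ "\<lambda>t. \<not> comparable mem s0 t"] by blast
  have "\<not> mem t0 s0" "\<not> mem s0 t0" using t0(2) unfolding comparable_def by auto
  have "subs mem s0 t0"
    by (rule level_subs_if_members_comparable[OF separation s0(1) t0(1) \<open>\<not> mem t0 s0\<close>])
      (rule s0_minimal[OF _ _ t0(1)])
  moreover have "subs mem t0 s0"
    by (rule level_subs_if_members_comparable[OF separation t0(1) s0(1) \<open>\<not> mem s0 t0\<close>])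
      (subst comparable_sym, rule t0_minimal)
  ultimately have "\<forall>x. mem x s0 \<longleftrightarrow> mem x t0" unfolding subs_def by blast
  then have "s0 = t0" using extensionality by blast
  with t0(2) show False unfolding comparable_def by blast
qed

theorem theorem12:
  fixes mem :: "'a \<Rightarrow> 'a \<Rightarrow> bool"
  assumes extensionality: "\<forall>a b. (\<forall>x. mem x a \<longleftrightarrow> mem x b) \<longrightarrow> a = b"
    and separation: "\<forall>F a. \<exists>b. \<forall>x. mem x b \<longleftrightarrow> (F x \<and> mem x a)"
  shows "(\<forall>F. (\<exists>s. level mem s \<and> F s) \<longrightarrow>
            (\<exists>s. level mem s \<and> F s \<and> \<not> (\<exists>r. mem r s \<and> level mem r \<and> F r)))
       \<and> (\<forall>s t. level mem s \<and> level mem t \<longrightarrow> mem s t \<or> s = t \<or> mem t s)"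
proof (intro conjI allI impI)
  fix F assume "\<exists>s. level mem s \<and> F s"
  then obtain s where "level mem s" "F s" by blast
  then show "\<exists>s. level mem s \<and> F s \<and> \<not> (\<exists>r. mem r s \<and> level mem r \<and> F r)"
    by (rule level_minimal_exists[OF separation])
next
  fix s t assume "level mem s \<and> level mem t"
  then show "mem s t \<or> s = t \<or> mem t s"
    using levels_comparable[OF extensionality separation, of s t] unfolding comparable_def by blast
qed
end
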